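(* Let $\mathcal M=(M,<,+,0,\ldots)$ be a definably complete locally o-minimal expansion of an ordered abelian group. Let $C\subseteq M^m$ and $P\subseteq M^n$ be definable sets with $C$ closed and bounded, and let $f:C\times P\to M$ be a definable function. Then $f$ is equi-continuous with respect to $P$ if and only if it is uniformly equi-continuous with respect to $P$.
   Context: Definable = with parameters. Definably complete: every definable subset of $M$ has sup and inf in $M\cup\{\pm\infty\}$. Locally o-minimal: for every definable $X\subseteq M$ and $a\in M$ there is an open interval $I\ni a$ with $X\cap I$ a finite union of points and open intervals. $|x|=\max_i|x_i|$. $f$ is equi-continuous w.r.t. $P$ if $\forall\varepsilon>0\ \forall x\in C\ \exists\delta>0\ \forall p\in P\ \forall x'\in C$: $|x-x'|<\delta\Rightarrow|f(x,p)-f(x',p)|<\varepsilon$. It is uniformly equi-continuous w.r.t. $P$ if $\forall\varepsilon>0\ \exists\delta>0\ \forall p\in P\ \forall x,x'\in C$: $|x-x'|<\delta\Rightarrow|f(x,p)-f(x',p)|<\varepsilon$. *)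

theory Defs
  imports Main
begin

text \<open>Points of M^n are lists of length n.  A (first-order) expansion of an ordered
abelian group (M,<,+,0), with definability allowing parameters, is represented in the
standard way (van den Dries) by the family S of its definable sets:
S n = the definable subsets of M^n.\<close>

definition definable_structure :: "(nat \<Rightarrow> ('a::linordered_ab_group_add) list set set) \<Rightarrow> bool" where
  "definable_structure S \<longleftrightarrow>
     (\<forall>n. \<forall>A\<in>S n. A \<subseteq> {xs. length xs = n})
   \<and> (\<forall>n. {xs. length xs = n} \<in> S n)
   \<and> (\<forall>n. \<forall>A\<in>S n. \<forall>B\<in>S n. A \<union> B \<in> S n \<and> A - B \<in> S n)
   \<and> (\<forall>n. \<forall>A\<in>S n. {x @ [a] | x a. x \<in> A} \<in> S (Suc n) \<and> {a # x | x a. x \<in> A} \<in> S (Suc n))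
   \<and> (\<forall>n i j. i < n \<and> j < n \<longrightarrow> {xs. length xs = n \<and> xs ! i = xs ! j} \<in> S n)
   \<and> (\<forall>n. \<forall>A\<in>S (Suc n). butlast ` A \<in> S n)
   \<and> {[x, y] | x y. x < y} \<in> S 2
   \<and> {[x, y, z] | x y z. z = x + y} \<in> S 3
   \<and> (\<forall>a. {[a]} \<in> S 1)"

text \<open>Definable completeness: every definable subset of M has sup and inf in M \<union> {\<plusminus>\<infinity>}.
(Sup = -\<infinity> for the empty set and +\<infinity> for sets unbounded above, so the condition is
that nonempty sets bounded above have a least upper bound; dually for inf.)\<close>

definition definably_complete :: "(nat \<Rightarrow> ('a::linordered_ab_group_add) list set set) \<Rightarrow> bool" where
  "definably_complete S \<longleftrightarrow>
     (\<forall>X\<in>S 1. let X' = {x. [x] \<in> X} in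
        (X' \<noteq> {} \<and> (\<exists>u. \<forall>x\<in>X'. x \<le> u) \<longrightarrow>
           (\<exists>s. (\<forall>x\<in>X'. x \<le> s) \<and> (\<forall>u. (\<forall>x\<in>X'. x \<le> u) \<longrightarrow> s \<le> u)))
      \<and> (X' \<noteq> {} \<and> (\<exists>l. \<forall>x\<in>X'. l \<le> x) \<longrightarrow>
           (\<exists>s. (\<forall>x\<in>X'. s \<le> x) \<and> (\<forall>l. (\<forall>x\<in>X'. l \<le> x) \<longrightarrow> l \<le> s))))"

definition locally_o_minimal :: "(nat \<Rightarrow> ('a::linordered_ab_group_add) list set set) \<Rightarrow> bool" where
  "locally_o_minimal S \<longleftrightarrow>
     (\<forall>X\<in>S 1. \<forall>a. \<exists>b c. b < a \<and> a < c \<and>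
        (\<exists>F J. finite F \<and> finite J \<and>
           {x. [x] \<in> X} \<inter> {b<..<c} = F \<union> (\<Union>(u, v)\<in>J. {u<..<v})))"

definition gabs :: "('a::linordered_ab_group_add) \<Rightarrow> 'a" where
  "gabs x = max x (- x)"

definition lnorm :: "('a::linordered_ab_group_add) list \<Rightarrow> 'a" where
  "lnorm xs = Max (insert 0 (set (map gabs xs)))"

definition ldist :: "('a::linordered_ab_group_add) list \<Rightarrow> 'a list \<Rightarrow> 'a" where
  "ldist xs ys = lnorm (map2 (-) xs ys)"

definition closed_in_power :: "nat \<Rightarrow> ('a::linordered_ab_group_add) list set \<Rightarrow> bool" where
  "closed_in_power m C \<longleftrightarrow>
     (\<forall>x. length x = m \<and> (\<forall>e>0. \<exists>y\<in>C. ldist x y < e) \<longrightarrow> x \<in> C)"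

definition bounded_in_power :: "('a::linordered_ab_group_add) list set \<Rightarrow> bool" where
  "bounded_in_power C \<longleftrightarrow> (\<exists>B. \<forall>x\<in>C. lnorm x \<le> B)"

definition equi_continuous ::
  "('a::linordered_ab_group_add) list set \<Rightarrow> 'a list set \<Rightarrow> ('a list \<Rightarrow> 'a list \<Rightarrow> 'a) \<Rightarrow> bool" where
  "equi_continuous C P f \<longleftrightarrow>
     (\<forall>e>0. \<forall>x\<in>C. \<exists>d>0. \<forall>p\<in>P. \<forall>x'\<in>C. ldist x x' < d \<longrightarrow> gabs (f x p - f x' p) < e)"

definition uniformly_equi_continuous ::
  "('a::linordered_ab_group_add) list set \<Rightarrow> 'a list set \<Rightarrow> ('a list \<Rightarrow> 'a list \<Rightarrow> 'a) \<Rightarrow> bool" where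
  "uniformly_equi_continuous C P f \<longleftrightarrow>
     (\<forall>e>0. \<exists>d>0. \<forall>p\<in>P. \<forall>x\<in>C. \<forall>x'\<in>C. ldist x x' < d \<longrightarrow> gabs (f x p - f x' p) < e)"

end

theory Submission
  imports Defs
begin

text \<open>
  If the order is discrete, points closer than the least positive element coincide and there is
  nothing to prove. Otherwise radii can be halved, and equicontinuity at x yields a radius r that
  serves as a common modulus at every point of C within r of x. Being such a radius is a definable
  property of (y, r), so it suffices to show that a definable, locally available radius can be
  chosen uniformly on a cube [-K,K]^m containing C. This goes by induction on m, the one-dimensional
  case being a definable Lebesgue-number argument: the supremum s of all t such that one radius
  works on [-K,t] exists by definable completeness, and the radius available near s shows s = K.
\<close>

lemma gabs_less_iff: "gabs (x::'a::linordered_ab_group_add) < r \<longleftrightarrow> x < r \<and> - x < r"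
  by (simp add: gabs_def)

lemma gabs_le_iff: "gabs (x::'a::linordered_ab_group_add) \<le> r \<longleftrightarrow> x \<le> r \<and> - x \<le> r"
  by (simp add: gabs_def)

lemma gabs_le_iff_mem_interval: "gabs (x::'a::linordered_ab_group_add) \<le> K \<longleftrightarrow> x \<in> {-K..K}"
  unfolding gabs_le_iff atLeastAtMost_iff by (metis minus_le_iff)

lemma gabs_diff_less_iff:
  "gabs ((a::'a::linordered_ab_group_add) - b) < r \<longleftrightarrow> a < r + b \<and> b < r + a"
  unfolding gabs_less_iff by (auto simp: algebra_simps less_diff_eq diff_less_eq)

lemma gabs_minus_commute: "gabs ((a::'a::linordered_ab_group_add) - b) = gabs (b - a)"
  unfolding gabs_def by (simp add: max.commute)

lemma gabs_triangle: "gabs ((x::'a::linordered_ab_group_add) + y) \<le> gabs x + gabs y"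
proof -
  have "x \<le> gabs x" "- x \<le> gabs x" "y \<le> gabs y" "- y \<le> gabs y"
    by (auto simp: gabs_def)
  then have "x + y \<le> gabs x + gabs y" "- (x + y) \<le> gabs x + gabs y"
    using add_mono[of "- x" "gabs x" "- y" "gabs y"] by (auto simp: add_mono)
  then show ?thesis by (simp add: gabs_le_iff)
qed

lemma gabs_diff_triangle:
  "gabs ((a::'a::linordered_ab_group_add) - c) \<le> gabs (a - b) + gabs (b - c)"
  using gabs_triangle[of "a - b" "b - c"] by simp

lemma lnorm_less_iff:
  "lnorm (xs::'a::linordered_ab_group_add list) < r \<longleftrightarrow> 0 < r \<and> (\<forall>i<length xs. gabs (xs!i) < r)"
  unfolding lnorm_def by (auto simp: in_set_conv_nth) (metis nth_mem)

lemma gabs_nth_le_lnorm: "i < length xs \<Longrightarrow> gabs (xs!i) \<le> lnorm (xs::'a::linordered_ab_group_add list)"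
  unfolding lnorm_def by (rule Max_ge) (auto simp: image_iff)

lemma ldist_less_iff:
  "length x = length y \<Longrightarrow>
   ldist (x::'a::linordered_ab_group_add list) y < r \<longleftrightarrow> 0 < r \<and> (\<forall>i<length x. gabs (x!i - y!i) < r)"
  unfolding ldist_def lnorm_less_iff by auto

lemma gabs_nth_diff_le_ldist:
  "length x = length y \<Longrightarrow> i < length x \<Longrightarrow> gabs (x!i - y!i) \<le> ldist (x::'a::linordered_ab_group_add list) y"
  unfolding ldist_def using gabs_nth_le_lnorm[of i "map2 (-) x y"] by auto

lemma ldist_Cons_less_iff:
  "length x = length y \<Longrightarrow>
   ldist ((a::'a::linordered_ab_group_add) # x) (b # y) < r \<longleftrightarrow> gabs (a - b) < r \<and> ldist x y < r"
  by (auto simp: ldist_less_iff less_Suc_eq_0_disj nth_Cons' gabs_less_iff)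

lemma ldist_triangle_less:
  fixes x y z :: "'a::linordered_ab_group_add list"
  assumes "length x = length y" "length y = length z" "ldist x y < a" "ldist y z < b"
  shows "ldist x z < a + b"
proof -
  have "gabs (x!i - z!i) < a + b" if "i < length x" for i
  proof -
    have "gabs (x!i - z!i) \<le> gabs (x!i - y!i) + gabs (y!i - z!i)" by (rule gabs_diff_triangle)
    also have "\<dots> < a + b" using assms that by (intro add_strict_mono) (auto simp: ldist_less_iff)
    finally show ?thesis .
  qed
  moreover have "0 < a + b" using assms by (auto simp: ldist_less_iff intro: add_pos_pos)
  ultimately show ?thesis using assms by (simp add: ldist_less_iff)
qed

lemma half_bound_exists:
  fixes a :: "'a::linordered_ab_group_add"
  assumes dense: "\<And>a::'a. 0 < a \<Longrightarrow> \<exists>b. 0 < b \<and> b < a" and "0 < a"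
  shows "\<exists>b>0. b + b \<le> a"
proof -
  obtain c where c: "0 < c" "c < a" using dense[OF \<open>0 < a\<close>] by blast
  show ?thesis
  proof (cases "c + c \<le> a")
    case False
    then have "(a - c) + (a - c) \<le> a" by (simp add: algebra_simps)
    then show ?thesis using c by (intro exI[of _ "a - c"]) simp
  qed (use c in blast)
qed

lemma map_nth_upt_eq_take_drop: "a + l \<le> length u \<Longrightarrow> map (nth u) [a..<a+l] = take l (drop a u)"
  by (rule nth_equalityI) auto

definition cube :: "nat \<Rightarrow> ('a::linordered_ab_group_add) \<Rightarrow> 'a list set" where
  "cube m K = {z. length z = m \<and> (\<forall>i<m. z!i \<in> {-K..K})}"

lemma cube_0: "cube 0 K = {[]}"
  unfolding cube_def by auto

lemma Cons_mem_cube_iff: "w # z \<in> cube (Suc m) K \<longleftrightarrow> w \<in> {-K..K} \<and> z \<in> cube m K"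
  unfolding cube_def by (auto simp: less_Suc_eq_0_disj)

lemma mem_cube_Suc_iff: "y \<in> cube (Suc m) K \<longleftrightarrow> (\<exists>w z. y = w # z \<and> w \<in> {-K..K} \<and> z \<in> cube m K)"
  by (cases y) (simp add: cube_def, simp add: Cons_mem_cube_iff)

lemma bounded_in_power_subset_cube:
  fixes C :: "('a::linordered_ab_group_add) list set"
  assumes "bounded_in_power C" "\<forall>x\<in>C. length x = m"
  obtains K where "0 \<le> K" "C \<subseteq> cube m K"
proof -
  obtain B where B: "\<forall>x\<in>C. lnorm x \<le> B" using assms(1) unfolding bounded_in_power_def by blast
  have "x!i \<in> {-max B 0..max B 0}" if "x \<in> C" "i < m" for x i
  proof -
    have "i < length x" using assms(2) that by simp
    then have "gabs (x!i) \<le> lnorm x" by (rule gabs_nth_le_lnorm)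
    also have "\<dots> \<le> max B 0" using B that(1) by (simp add: le_max_iff_disj)
    finally show ?thesis unfolding gabs_le_iff_mem_interval .
  qed
  then have "C \<subseteq> cube m (max B 0)" using assms(2) unfolding cube_def by blast
  then show ?thesis by (rule that[OF max.cobounded2])
qed

lemma prefix_radius_extend:
  fixes Q :: "'a::linordered_ab_group_add \<Rightarrow> 'a \<Rightarrow> bool"
  assumes mono: "\<And>y r r'. 0 < r' \<Longrightarrow> r' \<le> r \<Longrightarrow> Q y r \<Longrightarrow> Q y r'"
    and r1: "0 < r1" "\<forall>y\<in>{-K..t}. Q y r1"
    and r0: "0 < r0" "\<forall>y\<in>{-K..K}. gabs (s - y) < r0 \<longrightarrow> Q y r0"
    and "s - r0 < t" "t' \<le> K" "t' < s + r0"
  shows "\<exists>r>0. \<forall>y\<in>{-K..t'}. Q y r"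
proof (intro exI[of _ "min r0 r1"] conjI ballI)
  show "0 < min r0 r1" using r0 r1 by simp
  fix y assume y: "y \<in> {-K..t'}"
  show "Q y (min r0 r1)"
  proof (cases "y \<le> t")
    case True
    then show ?thesis using r1 y mono[of "min r0 r1" r1 y] r0(1) by auto
  next
    case False
    have "s < r0 + t" using assms(6) by (simp add: diff_less_eq add.commute)
    also have "\<dots> < r0 + y" using False by simp
    finally have "gabs (s - y) < r0"
      using y assms(8) by (auto simp: gabs_diff_less_iff add.commute)
    then show ?thesis using r0 y assms(7) mono[of "min r0 r1" r0 y] r1(1) by auto
  qed
qed

lemma slice_radius_locally:
  fixes Q :: "('a::linordered_ab_group_add) list \<Rightarrow> 'a \<Rightarrow> bool"
  assumes "\<forall>x\<in>cube (Suc m) K. \<exists>r>0. \<forall>y\<in>cube (Suc m) K. ldist x y < r \<longrightarrow> Q y r" "w0 \<in> {-K..K}"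
  shows "\<forall>z0\<in>cube m K. \<exists>r>0. \<forall>z\<in>cube m K. ldist z0 z < r \<longrightarrow> (\<forall>w\<in>{-K..K}. gabs (w0 - w) < r \<longrightarrow> Q (w # z) r)"
proof
  fix z0 assume "z0 \<in> cube m K"
  then have "w0 # z0 \<in> cube (Suc m) K" using assms(2) by (simp add: Cons_mem_cube_iff)
  then obtain r where "0 < r" "\<forall>y\<in>cube (Suc m) K. ldist (w0 # z0) y < r \<longrightarrow> Q y r"
    using assms(1) by blast
  moreover have "length z0 = length z" if "z \<in> cube m K" for z
    using that \<open>z0 \<in> cube m K\<close> by (simp add: cube_def)
  ultimately show "\<exists>r>0. \<forall>z\<in>cube m K. ldist z0 z < r \<longrightarrow> (\<forall>w\<in>{-K..K}. gabs (w0 - w) < r \<longrightarrow> Q (w # z) r)"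
    by (auto simp: Cons_mem_cube_iff ldist_Cons_less_iff)
qed

definition family_graph :: "'a list set \<Rightarrow> 'a list set \<Rightarrow> ('a list \<Rightarrow> 'a list \<Rightarrow> 'a) \<Rightarrow> 'a list set" where
  "family_graph C P f = {x @ p @ [f x p] | x p. x \<in> C \<and> p \<in> P}"

lemma append_mem_family_graph_iff:
  assumes "\<forall>x\<in>C. length x = m" "\<forall>p\<in>P. length p = n" "length y = m" "length p = n"
  shows "y @ p @ [a] \<in> family_graph C P f \<longleftrightarrow> y \<in> C \<and> p \<in> P \<and> a = f y p"
proof
  assume "y @ p @ [a] \<in> family_graph C P f"
  then obtain x q where xq: "x \<in> C" "q \<in> P" "y @ p @ [a] = x @ q @ [f x q]"
    unfolding family_graph_def by blast
  then have "y = x" "p @ [a] = q @ [f x q]" using assms by auto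
  moreover have "length p = length q" using xq assms by auto
  ultimately show "y \<in> C \<and> p \<in> P \<and> a = f y p" using xq by auto
qed (auto simp: family_graph_def)

text \<open>Vacuous off C, so that a radius can be demanded on a whole cube containing C.\<close>

definition equi_radius ::
  "('a::linordered_ab_group_add) list set \<Rightarrow> 'a list set \<Rightarrow> ('a list \<Rightarrow> 'a list \<Rightarrow> 'a) \<Rightarrow> 'a \<Rightarrow> 'a list \<Rightarrow> 'a \<Rightarrow> bool"
where
  "equi_radius C P f e y r \<longleftrightarrow> (y \<in> C \<longrightarrow> (\<forall>p\<in>P. \<forall>x'\<in>C. ldist y x' < r \<longrightarrow> gabs (f y p - f x' p) < e))"

lemma equi_radius_iff_family_graph:
  assumes "\<forall>x\<in>C. length x = m" "\<forall>p\<in>P. length p = n" "length y = m"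
  shows "equi_radius C P f e y r \<longleftrightarrow>
    (\<forall>p. length p = n \<longrightarrow> (\<forall>x'. length x' = m \<longrightarrow> (\<forall>a b.
      y @ p @ [a] \<in> family_graph C P f \<longrightarrow> x' @ p @ [b] \<in> family_graph C P f \<longrightarrow>
      0 < r \<and> (\<forall>i<m. gabs (y!i - x'!i) < r) \<longrightarrow> gabs (a - b) < e)))"
  using assms unfolding equi_radius_def
  by (auto simp: append_mem_family_graph_iff[OF assms(1,2)] ldist_less_iff)

lemma nth_equi_radius_layout:
  fixes y p x' :: "'a list" and r a b :: 'a
  assumes "length y = m" "length p = n" "length x' = m"
  defines "U \<equiv> y @ r # p @ x' @ [a, b]" and "N \<equiv> Suc m + n + m"
  shows "map (nth U) ([0..<m] @ [Suc m..<Suc m+n] @ [N]) = y @ p @ [a]"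
    and "map (nth U) ([Suc m+n..<N] @ [Suc m..<Suc m+n] @ [Suc N]) = x' @ p @ [b]"
    and "U!m = r" "U!N = a" "U!Suc N = b"
    and "\<And>i. i < m \<Longrightarrow> U!i = y!i" "\<And>i. i < m \<Longrightarrow> U!(Suc m+n+i) = x'!i"
proof -
  have "length U = Suc (Suc N)" using assms unfolding U_def N_def by simp
  then have "map (nth U) [0..<m] = y" "map (nth U) [Suc m..<Suc m+n] = p" "map (nth U) [Suc m+n..<N] = x'"
    using assms map_nth_upt_eq_take_drop[of 0 m U] map_nth_upt_eq_take_drop[of "Suc m" n U]
      map_nth_upt_eq_take_drop[of "Suc m + n" m U]
    by (auto simp: U_def N_def)
  moreover show "U!m = r" "U!N = a" "U!Suc N = b"
    using assms unfolding U_def N_def by (auto simp: nth_append)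
  ultimately show "map (nth U) ([0..<m] @ [Suc m..<Suc m+n] @ [N]) = y @ p @ [a]"
    "map (nth U) ([Suc m+n..<N] @ [Suc m..<Suc m+n] @ [Suc N]) = x' @ p @ [b]"
    by simp_all
  show "\<And>i. i < m \<Longrightarrow> U!i = y!i" "\<And>i. i < m \<Longrightarrow> U!(Suc m+n+i) = x'!i"
    using assms unfolding U_def by (auto simp: nth_append)
qed

lemma equi_radius_locally:
  fixes C P :: "('a::linordered_ab_group_add) list set"
  assumes dense: "\<And>a::'a. 0 < a \<Longrightarrow> \<exists>b. 0 < b \<and> b < a"
    and "\<forall>x\<in>C. length x = m" "closed_in_power m C" "equi_continuous C P f"
    and "length x = m" "0 < e"
  shows "\<exists>r>0. \<forall>y. ldist x y < r \<longrightarrow> equi_radius C P f e y r"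
proof (cases "x \<in> C")
  case True
  obtain e1 where e1: "0 < e1" "e1 + e1 \<le> e" using half_bound_exists[OF dense \<open>0 < e\<close>] by blast
  obtain \<delta> where \<delta>: "0 < \<delta>" "\<forall>p\<in>P. \<forall>x'\<in>C. ldist x x' < \<delta> \<longrightarrow> gabs (f x p - f x' p) < e1"
    using assms(4) True e1(1) unfolding equi_continuous_def by blast
  obtain r where r: "0 < r" "r + r \<le> \<delta>" using half_bound_exists[OF dense \<delta>(1)] by blast
  have "gabs (f y p - f x' p) < e"
    if y: "ldist x y < r" "y \<in> C" and "p \<in> P" "x' \<in> C" "ldist y x' < r" for y p x'
  proof -
    have "length y = m" "length x' = m" using assms(2) that by auto
    then have "ldist x x' < r + r" using ldist_triangle_less[of x y x' r r] that assms(5) by simp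
    then have "gabs (f x p - f x' p) < e1" using \<delta> r that by (meson order_less_le_trans)
    moreover have "gabs (f y p - f x p) < e1"
    proof -
      have "r < \<delta>" using r by (simp add: order_less_le_trans[of r "r + r"])
      then have "gabs (f x p - f y p) < e1" using \<delta> y \<open>p \<in> P\<close> by simp
      then show ?thesis by (simp add: gabs_minus_commute)
    qed
    ultimately have "gabs (f y p - f x p) + gabs (f x p - f x' p) < e" using e1(2)
      by (meson add_strict_mono order_less_le_trans)
    then show ?thesis using gabs_diff_triangle order_le_less_trans by blast
  qed
  then show ?thesis using r(1) unfolding equi_radius_def by blast
next
  case False
  then obtain \<rho> where "0 < \<rho>" "\<forall>y\<in>C. \<not> ldist x y < \<rho>"
    using assms(3,5) unfolding closed_in_power_def by blast
  then show ?thesis unfolding equi_radius_def by blast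
qed

lemma uniformly_equi_continuous_if_discrete:
  fixes C :: "('a::linordered_ab_group_add) list set" and u :: 'a
  assumes "0 < u" "\<forall>b. 0 < b \<longrightarrow> \<not> b < u" "\<forall>x\<in>C. length x = m"
  shows "uniformly_equi_continuous C P f"
  unfolding uniformly_equi_continuous_def
proof (intro allI impI exI[of _ u] conjI ballI)
  show "0 < u" by fact
next
  fix e :: 'a and p x x' assume "0 < e" "p \<in> P" "x \<in> C" "x' \<in> C" "ldist x x' < u"
  have "x = x'"
  proof (rule nth_equalityI)
    show "length x = length x'" using \<open>x \<in> C\<close> \<open>x' \<in> C\<close> assms(3) by simp
    fix i assume "i < length x"
    have "gabs (x!i - x'!i) < u"
      using gabs_nth_diff_le_ldist[OF \<open>length x = length x'\<close> \<open>i < length x\<close>] \<open>ldist x x' < u\<close>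
      by (rule order_le_less_trans)
    then have "\<not> 0 < gabs (x!i - x'!i)" using assms(2) by blast
    then have "gabs (x!i - x'!i) \<le> 0" by (simp add: not_less)
    then show "x!i = x'!i" by (auto simp: gabs_le_iff)
  qed
  then show "gabs (f x p - f x' p) < e" using \<open>0 < e\<close> by (simp add: gabs_def)
qed

locale ordered_group_expansion =
  fixes S :: "nat \<Rightarrow> ('a::linordered_ab_group_add) list set set"
  assumes expansion: "definable_structure S"
begin

lemmas expansion_unfolded = expansion[unfolded definable_structure_def]

lemma length_of_definable: "A \<in> S n \<Longrightarrow> xs \<in> A \<Longrightarrow> length xs = n"
  using expansion_unfolded[THEN conjunct1] by blast

lemma definable_all_tuples: "{xs. length xs = n} \<in> S n"
  using expansion_unfolded[THEN conjunct2, THEN conjunct1] by blast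

lemma definable_set_diff: "A \<in> S n \<Longrightarrow> B \<in> S n \<Longrightarrow> A - B \<in> S n"
  using expansion_unfolded[THEN conjunct2, THEN conjunct2, THEN conjunct1] by blast

lemma definable_Cons_image: "A \<in> S n \<Longrightarrow> {a # x | x a. x \<in> A} \<in> S (Suc n)"
  using expansion_unfolded[THEN conjunct2, THEN conjunct2, THEN conjunct2, THEN conjunct1] by blast

lemma definable_diagonal: "i < n \<Longrightarrow> j < n \<Longrightarrow> {xs. length xs = n \<and> xs ! i = xs ! j} \<in> S n"
  using expansion_unfolded[THEN conjunct2, THEN conjunct2, THEN conjunct2, THEN conjunct2, THEN conjunct1] by blast

lemma definable_butlast_image: "A \<in> S (Suc n) \<Longrightarrow> butlast ` A \<in> S n"
  using expansion_unfolded[THEN conjunct2, THEN conjunct2, THEN conjunct2, THEN conjunct2, THEN conjunct2, THEN conjunct1] by blast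

lemma definable_less_graph: "{[x, y] | x y. x < y} \<in> S 2"
  using expansion_unfolded[THEN conjunct2, THEN conjunct2, THEN conjunct2, THEN conjunct2, THEN conjunct2, THEN conjunct2, THEN conjunct1] .

lemma definable_add_graph: "{[x, y, z] | x y z. z = x + y} \<in> S 3"
  using expansion_unfolded[THEN conjunct2, THEN conjunct2, THEN conjunct2, THEN conjunct2, THEN conjunct2, THEN conjunct2, THEN conjunct2, THEN conjunct1] .

lemma definable_singleton: "{[a]} \<in> S 1"
  using expansion_unfolded[THEN conjunct2, THEN conjunct2, THEN conjunct2, THEN conjunct2, THEN conjunct2, THEN conjunct2, THEN conjunct2, THEN conjunct2] by blast

definition definable :: "nat \<Rightarrow> ('a list \<Rightarrow> bool) \<Rightarrow> bool" where
  "definable k \<phi> \<longleftrightarrow> {xs. length xs = k \<and> \<phi> xs} \<in> S k"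

lemma definable_cong:
  assumes "definable k \<phi>" "\<And>xs. length xs = k \<Longrightarrow> \<phi> xs = \<psi> xs"
  shows "definable k \<psi>"
proof -
  have "{xs. length xs = k \<and> \<phi> xs} = {xs. length xs = k \<and> \<psi> xs}" using assms(2) by auto
  then show ?thesis using assms(1) unfolding definable_def by simp
qed

lemma definable_True: "definable k (\<lambda>_. True)"
  unfolding definable_def using definable_all_tuples by simp

lemma definable_Not:
  assumes "definable k \<phi>"
  shows "definable k (\<lambda>xs. \<not> \<phi> xs)"
proof -
  have "{xs. length xs = k} - {xs. length xs = k \<and> \<phi> xs} \<in> S k"
    using assms unfolding definable_def by (rule definable_set_diff[OF definable_all_tuples])
  moreover have "{xs. length xs = k} - {xs. length xs = k \<and> \<phi> xs} = {xs. length xs = k \<and> \<not> \<phi> xs}"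
    by auto
  ultimately show ?thesis unfolding definable_def by simp
qed

lemma definable_conj: "definable k \<phi> \<Longrightarrow> definable k \<psi> \<Longrightarrow> definable k (\<lambda>xs. \<phi> xs \<and> \<psi> xs)"
  unfolding definable_def
proof -
  assume a: "{xs. length xs = k \<and> \<phi> xs} \<in> S k" and b: "{xs. length xs = k \<and> \<psi> xs} \<in> S k"
  have "{xs. length xs = k \<and> \<phi> xs} - ({xs. length xs = k \<and> \<phi> xs} - {xs. length xs = k \<and> \<psi> xs})
     = {xs. length xs = k \<and> \<phi> xs \<and> \<psi> xs}" by auto
  with definable_set_diff[OF a definable_set_diff[OF a b]]
  show "{xs. length xs = k \<and> \<phi> xs \<and> \<psi> xs} \<in> S k" by simp
qed

lemma definable_imp: "definable k \<phi> \<Longrightarrow> definable k \<psi> \<Longrightarrow> definable k (\<lambda>xs. \<phi> xs \<longrightarrow> \<psi> xs)"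
  by (rule definable_cong[OF definable_Not[OF definable_conj[OF _ definable_Not]]]) auto

lemma definable_ex: "definable (Suc k) \<phi> \<Longrightarrow> definable k (\<lambda>xs. \<exists>a. \<phi> (xs @ [a]))"
  unfolding definable_def
proof -
  assume a: "{xs. length xs = Suc k \<and> \<phi> xs} \<in> S (Suc k)"
  have "butlast ` {xs. length xs = Suc k \<and> \<phi> xs} = {xs. length xs = k \<and> (\<exists>a. \<phi> (xs @ [a]))}"
  proof (intro set_eqI iffI)
    fix xs assume "xs \<in> butlast ` {xs. length xs = Suc k \<and> \<phi> xs}"
    then obtain v where v: "length v = Suc k" "\<phi> v" "xs = butlast v" by auto
    then have "v \<noteq> []" by auto
    then have "v = xs @ [last v]" using v(3) by simp
    then have "\<phi> (xs @ [last v])" using v(2) by simp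
    then show "xs \<in> {xs. length xs = k \<and> (\<exists>a. \<phi> (xs @ [a]))}" using v by auto
  next
    fix xs assume "xs \<in> {xs. length xs = k \<and> (\<exists>a. \<phi> (xs @ [a]))}"
    then obtain a where "length xs = k" "\<phi> (xs @ [a])" by auto
    then show "xs \<in> butlast ` {xs. length xs = Suc k \<and> \<phi> xs}"
      by (intro image_eqI[of _ _ "xs @ [a]"]) auto
  qed
  with definable_butlast_image[OF a] show "{xs. length xs = k \<and> (\<exists>a. \<phi> (xs @ [a]))} \<in> S k" by simp
qed

lemma definable_all: "definable (Suc k) \<phi> \<Longrightarrow> definable k (\<lambda>xs. \<forall>a. \<phi> (xs @ [a]))"
  by (rule definable_cong[OF definable_Not[OF definable_ex[OF definable_Not]]]) auto

lemma definable_ex_list: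
  "definable (k + l) \<phi> \<Longrightarrow> definable k (\<lambda>xs. \<exists>ys. length ys = l \<and> \<phi> (xs @ ys))"
proof (induction l arbitrary: \<phi>)
  case 0
  then show ?case by (simp cong: conj_cong)
next
  case (Suc l)
  have "definable k (\<lambda>xs. \<exists>ys. length ys = l \<and> (\<exists>a. \<phi> ((xs @ ys) @ [a])))"
    using Suc.IH[OF definable_ex] Suc.prems by simp
  then show ?case
  proof (rule definable_cong)
    fix xs :: "'a list"
    show "(\<exists>ys. length ys = l \<and> (\<exists>a. \<phi> ((xs @ ys) @ [a]))) = (\<exists>ys. length ys = Suc l \<and> \<phi> (xs @ ys))"
    proof
      assume "\<exists>ys. length ys = l \<and> (\<exists>a. \<phi> ((xs @ ys) @ [a]))"
      then obtain ys a where "length ys = l" "\<phi> ((xs @ ys) @ [a])" by blast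
      then show "\<exists>ys. length ys = Suc l \<and> \<phi> (xs @ ys)" by (intro exI[of _ "ys @ [a]"]) simp
    next
      assume "\<exists>ys. length ys = Suc l \<and> \<phi> (xs @ ys)"
      then obtain ys where ys: "length ys = Suc l" "\<phi> (xs @ ys)" by blast
      then obtain zs a where "ys = zs @ [a]" by (metis length_Suc_conv_rev)
      then show "\<exists>ys. length ys = l \<and> (\<exists>a. \<phi> ((xs @ ys) @ [a]))" using ys by auto
    qed
  qed
qed

lemma definable_all_list:
  "definable (k + l) \<phi> \<Longrightarrow> definable k (\<lambda>xs. \<forall>ys. length ys = l \<longrightarrow> \<phi> (xs @ ys))"
  by (rule definable_cong[OF definable_Not[OF definable_ex_list[OF definable_Not]]]) auto

lemma definable_all_less:
  "(\<And>i. i < (N::nat) \<Longrightarrow> definable k (\<phi> i)) \<Longrightarrow> definable k (\<lambda>xs. \<forall>i<N. \<phi> i xs)"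
proof (induction N)
  case 0
  then show ?case using definable_True by simp
next
  case (Suc N)
  have "definable k (\<lambda>xs. (\<forall>i<N. \<phi> i xs) \<and> \<phi> N xs)"
    using Suc by (intro definable_conj) auto
  then show ?case by (rule definable_cong) (auto simp: less_Suc_eq)
qed

lemma definable_drop_mem: "B \<in> S l \<Longrightarrow> definable (j + l) (\<lambda>v. drop j v \<in> B)"
proof (induction j)
  case 0
  then have "{v. length v = l \<and> v \<in> B} = B" using length_of_definable[OF 0] by auto
  then show ?case using 0 unfolding definable_def by simp
next
  case (Suc j)
  have "{a # x | x a. x \<in> {v. length v = j + l \<and> drop j v \<in> B}}
      = {v. length v = Suc j + l \<and> drop (Suc j) v \<in> B}"
  proof (intro set_eqI iffI)
    fix v assume "v \<in> {v. length v = Suc j + l \<and> drop (Suc j) v \<in> B}"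
    then show "v \<in> {a # x | x a. x \<in> {v. length v = j + l \<and> drop j v \<in> B}}"
      by (cases v) auto
  qed auto
  then show ?case
    using definable_Cons_image[OF Suc.IH[OF Suc.prems, unfolded definable_def]]
    unfolding definable_def add_Suc by (simp only:)
qed

lemma definable_map_nth_mem:
  assumes A: "A \<in> S l" and len: "length is = l" and idx: "\<forall>i\<in>set is. i < k"
  shows "definable k (\<lambda>xs. map (nth xs) is \<in> A)"
proof -
  have diag: "definable (k + l) (\<lambda>v. \<forall>j<l. v!(k+j) = v!(is!j))"
  proof (rule definable_all_less)
    fix j assume "j < l"
    then have "k + j < k + l" "is!j < k + l" using idx len by (auto simp: trans_less_add1)
    then show "definable (k + l) (\<lambda>v. v!(k+j) = v!(is!j))"
      unfolding definable_def using definable_diagonal by blast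
  qed
  from definable_ex_list[OF definable_conj[OF definable_drop_mem[OF A] diag]]
  show ?thesis
  proof (rule definable_cong)
    fix xs :: "'a list" assume lx: "length xs = k"
    show "(\<exists>ys. length ys = l \<and> drop k (xs @ ys) \<in> A \<and> (\<forall>j<l. (xs @ ys) ! (k + j) = (xs @ ys) ! (is ! j)))
          = (map (nth xs) is \<in> A)"
    proof
      assume "\<exists>ys. length ys = l \<and> drop k (xs @ ys) \<in> A \<and> (\<forall>j<l. (xs @ ys) ! (k + j) = (xs @ ys) ! (is ! j))"
      then obtain ys where ys: "length ys = l" "ys \<in> A" "\<forall>j<l. ys ! j = xs ! (is ! j)"
        using lx idx len by (auto simp: nth_append)
      have "ys = map (nth xs) is" using ys len by (intro nth_equalityI) auto
      then show "map (nth xs) is \<in> A" using ys by simp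
    next
      assume "map (nth xs) is \<in> A"
      then show "\<exists>ys. length ys = l \<and> drop k (xs @ ys) \<in> A \<and> (\<forall>j<l. (xs @ ys) ! (k + j) = (xs @ ys) ! (is ! j))"
        using lx idx len by (intro exI[of _ "map (nth xs) is"]) (auto simp: nth_append)
    qed
  qed
qed

lemma definable_map_nth:
  assumes "definable l \<phi>" "length is = l" "\<forall>i\<in>set is. i < k"
  shows "definable k (\<lambda>xs. \<phi> (map (nth xs) is))"
  using definable_map_nth_mem[OF assms(1)[unfolded definable_def] assms(2,3)]
  by (rule definable_cong) (use assms(2) in auto)

lemma definable_instantiate_last:
  assumes "definable (Suc k) \<psi>" "\<And>xs. length xs = k \<Longrightarrow> \<phi> xs = \<psi> (xs @ [c])"
  shows "definable k \<phi>"
proof -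
  have "definable (Suc k) (\<lambda>xs. xs ! k = c)"
    using definable_map_nth_mem[OF definable_singleton, of "[k]" "Suc k"]
    by (rule definable_cong) auto
  from definable_ex[OF definable_conj[OF this assms(1)]] show ?thesis
  proof (rule definable_cong)
    fix xs :: "'a list" assume "length xs = k"
    then show "(\<exists>a. (xs @ [a]) ! k = c \<and> \<psi> (xs @ [a])) = \<phi> xs"
      using assms(2) by (auto simp: nth_append)
  qed
qed

lemma definable_nth_less: "i < k \<Longrightarrow> j < k \<Longrightarrow> definable k (\<lambda>xs. xs!i < xs!j)"
proof -
  have graph: "{[x, y] | x y. x < y} = {xs. length xs = 2 \<and> xs!0 < xs!1}"
    by (auto simp: numeral_2_eq_2 length_Suc_conv)
  have "definable 2 (\<lambda>v. v!0 < v!1)"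
    by (simp only: definable_def graph[symmetric] definable_less_graph)
  from definable_map_nth[OF this, of "[i,j]" k] show "i < k \<Longrightarrow> j < k \<Longrightarrow> ?thesis" by simp
qed

lemma definable_nth_le: "i < k \<Longrightarrow> j < k \<Longrightarrow> definable k (\<lambda>xs. xs!i \<le> xs!j)"
  using definable_Not[OF definable_nth_less[of j k i]] by (simp add: not_less)

lemma definable_nth_less_add:
  assumes "i < k" "j < k" "l < k"
  shows "definable k (\<lambda>xs. xs!i < xs!j + xs!l)"
proof -
  have graph: "{[x, y, z] | x y z. z = x + y} = {xs. length xs = 3 \<and> xs!2 = xs!0 + xs!1}"
    by (auto simp: numeral_3_eq_3 numeral_2_eq_2 length_Suc_conv)
  have "definable 3 (\<lambda>v. v!2 = v!0 + v!1)"
    by (simp only: definable_def graph[symmetric] definable_add_graph)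
  from definable_map_nth[OF this, of "[j,l,k]" "Suc k"]
  have "definable (Suc k) (\<lambda>v. v!k = v!j + v!l)"
    using assms by (simp add: numeral_2_eq_2)
  then have "definable (Suc k) (\<lambda>v. v!k = v!j + v!l \<and> v!i < v!k)"
    using assms by (intro definable_conj definable_nth_less) auto
  from definable_ex[OF this] show ?thesis
    by (rule definable_cong) (use assms in \<open>auto simp: nth_append\<close>)
qed

lemma definable_gabs_diff_less:
  assumes "i < k" "j < k" "l < k"
  shows "definable k (\<lambda>xs. gabs (xs!i - xs!j) < xs!l)"
proof -
  have "definable k (\<lambda>xs. xs!i < xs!l + xs!j \<and> xs!j < xs!l + xs!i)"
    using assms by (intro definable_conj definable_nth_less_add)
  then show ?thesis by (rule definable_cong) (simp add: gabs_diff_less_iff)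
qed

lemma definable_le_const: "i < k \<Longrightarrow> definable k (\<lambda>xs. xs!i \<le> c)"
  by (rule definable_instantiate_last[OF definable_nth_le[of i "Suc k" k], of _ c]) (auto simp: nth_append)

lemma definable_const_le: "i < k \<Longrightarrow> definable k (\<lambda>xs. c \<le> xs!i)"
  by (rule definable_instantiate_last[OF definable_nth_le[of k "Suc k" i], of _ c]) (auto simp: nth_append)

lemma definable_pos: "i < k \<Longrightarrow> definable k (\<lambda>xs. 0 < xs!i)"
  by (rule definable_instantiate_last[OF definable_nth_less[of k "Suc k" i], of _ 0]) (auto simp: nth_append)

lemma definable_prefix_radius:
  assumes "definable 2 (\<lambda>v. Q (v!0) (v!1))"
  shows "definable 1 (\<lambda>v. v!0 \<in> {-K..K} \<and> (\<exists>r>0. \<forall>y\<in>{-K..v!0}. Q y r))"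
proof -
  have "definable 3 (\<lambda>u. -K \<le> u!2 \<and> u!2 \<le> u!0 \<longrightarrow> Q (u!2) (u!1))"
  proof (intro definable_imp definable_conj)
    show "definable 3 (\<lambda>u. - K \<le> u ! 2)" by (rule definable_const_le) simp
    show "definable 3 (\<lambda>u. u ! 2 \<le> u ! 0)" by (rule definable_nth_le) auto
    show "definable 3 (\<lambda>u. Q (u ! 2) (u ! 1))"
      using definable_map_nth[OF assms, of "[2,1]" 3] by simp
  qed
  then have "definable 2 (\<lambda>v. \<forall>a. -K \<le> (v@[a])!2 \<and> (v@[a])!2 \<le> (v@[a])!0 \<longrightarrow> Q ((v@[a])!2) ((v@[a])!1))"
    using definable_all[of 2] by (simp add: numeral_3_eq_3 del: One_nat_def)
  then have "definable 2 (\<lambda>v. \<forall>y\<in>{-K..v!0}. Q y (v!1))"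
    by (rule definable_cong) (auto simp: nth_append)
  then have "definable 2 (\<lambda>v. 0 < v!1 \<and> (\<forall>y\<in>{-K..v!0}. Q y (v!1)))"
    by (intro definable_conj definable_pos) auto
  then have "definable 1 (\<lambda>v. \<exists>a. 0 < (v@[a])!1 \<and> (\<forall>y\<in>{-K..(v@[a])!0}. Q y ((v@[a])!1)))"
    using definable_ex[of 1] by (simp add: numeral_2_eq_2)
  then have "definable 1 (\<lambda>v. \<exists>r>0. \<forall>y\<in>{-K..v!0}. Q y r)"
    by (rule definable_cong) (auto simp: nth_append)
  then have "definable 1 (\<lambda>v. (-K \<le> v!0 \<and> v!0 \<le> K) \<and> (\<exists>r>0. \<forall>y\<in>{-K..v!0}. Q y r))"
    by (intro definable_conj definable_const_le definable_le_const) auto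
  then show ?thesis by (rule definable_cong) simp
qed

lemma definable_slice_radius:
  assumes "definable (Suc (Suc m)) (\<lambda>v. Q (butlast v) (last v))"
  shows "definable (Suc m) (\<lambda>v. \<forall>w\<in>{-K..K}. gabs (w0 - w) < last v \<longrightarrow> Q (w # butlast v) (last v))"
proof -
  have "definable (Suc (Suc m)) (\<lambda>u. Q (u!(Suc m) # take m u) (u!m))"
    using definable_map_nth[OF assms, of "Suc m # [0..<m] @ [m]" "Suc (Suc m)"]
    by (rule definable_cong) (auto simp: map_nth_upt_eq_take_drop[of 0 m, simplified])
  then have "definable (Suc (Suc m)) (\<lambda>u. -K \<le> u!(Suc m) \<and> u!(Suc m) \<le> K \<and> gabs (w0 - u!(Suc m)) < u!m
      \<longrightarrow> Q (u!(Suc m) # take m u) (u!m))"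
  proof (intro definable_imp definable_conj)
    show "definable (Suc (Suc m)) (\<lambda>u. gabs (w0 - u ! Suc m) < u ! m)"
      using definable_gabs_diff_less[of "Suc (Suc m)" "Suc (Suc (Suc m))" "Suc m" m]
      by (rule definable_instantiate_last) (auto simp: nth_append)
  qed (auto intro: definable_const_le definable_le_const)
  from definable_all[OF this] show ?thesis
  proof (rule definable_cong)
    fix v :: "'a list" assume v: "length v = Suc m"
    then have "v \<noteq> []" by auto
    then have "\<And>a. (v @ [a]) ! Suc m = a" "\<And>a. (v @ [a]) ! m = last v" "\<And>a. take m (v @ [a]) = butlast v"
      using v last_conv_nth[of v] by (auto simp: nth_append butlast_conv_take)
    then show "(\<forall>a. - K \<le> (v @ [a]) ! Suc m \<and> (v @ [a]) ! Suc m \<le> K \<and> gabs (w0 - (v @ [a]) ! Suc m) < (v @ [a]) ! m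
        \<longrightarrow> Q ((v @ [a]) ! Suc m # take m (v @ [a])) ((v @ [a]) ! m)) =
      (\<forall>w\<in>{-K..K}. gabs (w0 - w) < last v \<longrightarrow> Q (w # butlast v) (last v))"
      by auto
  qed
qed

lemma definable_cube_fibre_radius:
  assumes "definable (Suc (Suc m)) (\<lambda>v. Q (butlast v) (last v))"
  shows "definable 2 (\<lambda>v. \<forall>z\<in>cube m K. Q (v!0 # z) (v!1))"
proof -
  have "definable (2 + m) (\<lambda>u. Q (u!0 # drop 2 u) (u!1))"
    using definable_map_nth[OF assms, of "0 # [2..<2+m] @ [1]" "2 + m"]
  proof (rule definable_cong)
    fix u :: "'a list" assume "length u = 2 + m"
    then have "map (nth u) [2..<2+m] = drop 2 u" using map_nth_upt_eq_take_drop[of 2 m u] by simp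
    then show "Q (butlast (map (nth u) (0 # [2..<2+m] @ [1]))) (last (map (nth u) (0 # [2..<2+m] @ [1])))
      = Q (u!0 # drop 2 u) (u!1)" by simp
  qed auto
  then have "definable (2 + m) (\<lambda>u. (\<forall>i<m. -K \<le> u!(2+i) \<and> u!(2+i) \<le> K) \<longrightarrow> Q (u!0 # drop 2 u) (u!1))"
    by (intro definable_imp definable_all_less definable_conj) (auto intro: definable_const_le definable_le_const)
  from definable_all_list[OF this] show ?thesis
  proof (rule definable_cong)
    fix v :: "'a list" assume "length v = 2"
    then have "\<And>ys i. (v @ ys) ! (2 + i) = ys ! i" "\<And>ys. drop 2 (v @ ys) = ys"
      "\<And>ys. (v @ ys) ! 0 = v ! 0" "\<And>ys. (v @ ys) ! 1 = v ! 1"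
      by (auto simp: nth_append)
    then show "(\<forall>ys. length ys = m \<longrightarrow> (\<forall>i<m. - K \<le> (v @ ys) ! (2 + i) \<and> (v @ ys) ! (2 + i) \<le> K) \<longrightarrow>
        Q ((v @ ys) ! 0 # drop 2 (v @ ys)) ((v @ ys) ! 1)) = (\<forall>z\<in>cube m K. Q (v ! 0 # z) (v ! 1))"
      unfolding cube_def by auto
  qed
qed

lemma definable_equi_radius_tuple:
  assumes graph: "G \<in> S (m + n + 1)"
  defines "N \<equiv> Suc m + n + m"
  shows "definable (Suc (Suc N)) (\<lambda>u.
    map (nth u) ([0..<m] @ [Suc m..<Suc m+n] @ [N]) \<in> G \<longrightarrow>
    map (nth u) ([Suc m+n..<N] @ [Suc m..<Suc m+n] @ [Suc N]) \<in> G \<longrightarrow>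
    0 < u!m \<and> (\<forall>i<m. gabs (u!i - u!(Suc m+n+i)) < u!m) \<longrightarrow> gabs (u!N - u!(Suc N)) < e)"
proof (intro definable_imp definable_conj definable_all_less)
  show "definable (Suc (Suc N)) (\<lambda>u. gabs (u ! N - u ! Suc N) < e)"
    using definable_gabs_diff_less[of N "Suc (Suc (Suc N))" "Suc N" "Suc (Suc N)"]
    by (rule definable_instantiate_last) (auto simp: nth_append)
  show "definable (Suc (Suc N)) (\<lambda>u. map (nth u) ([0..<m] @ [Suc m..<Suc m+n] @ [N]) \<in> G)"
    "definable (Suc (Suc N)) (\<lambda>u. map (nth u) ([Suc m+n..<N] @ [Suc m..<Suc m+n] @ [Suc N]) \<in> G)"
    by (rule definable_map_nth_mem[OF graph]; auto simp: N_def)+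
  show "definable (Suc (Suc N)) (\<lambda>u. 0 < u ! m)"
    by (rule definable_pos) (simp add: N_def)
  show "\<And>i. i < m \<Longrightarrow> definable (Suc (Suc N)) (\<lambda>u. gabs (u ! i - u ! (Suc m + n + i)) < u ! m)"
    by (rule definable_gabs_diff_less) (auto simp: N_def)
qed

lemma definable_equi_radius:
  assumes "C \<in> S m" "P \<in> S n" and graph: "family_graph C P f \<in> S (m + n + 1)"
  shows "definable (Suc m) (\<lambda>v. equi_radius C P f e (butlast v) (last v))"
proof -
  define N where "N = Suc m + n + m"
  (* The tuple u is laid out as y @ r # p @ x' @ [a, b] (see nth_equi_radius_layout); the two
     graph memberships force a = f y p and b = f x' p. *)
  define \<psi> where "\<psi> u \<longleftrightarrow>
    (map (nth u) ([0..<m] @ [Suc m..<Suc m+n] @ [N]) \<in> family_graph C P f \<longrightarrow>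
     map (nth u) ([Suc m+n..<N] @ [Suc m..<Suc m+n] @ [Suc N]) \<in> family_graph C P f \<longrightarrow>
     0 < u!m \<and> (\<forall>i<m. gabs (u!i - u!(Suc m+n+i)) < u!m) \<longrightarrow> gabs (u!N - u!(Suc N)) < e)" for u
  have "definable (Suc (Suc N)) \<psi>"
    unfolding \<psi>_def N_def by (rule definable_equi_radius_tuple[OF graph])
  have \<psi>_layout: "\<psi> (y @ r # p @ x' @ [a, b]) \<longleftrightarrow>
      (y @ p @ [a] \<in> family_graph C P f \<longrightarrow> x' @ p @ [b] \<in> family_graph C P f \<longrightarrow> 0 < r \<and> (\<forall>i<m. gabs (y!i - x'!i) < r) \<longrightarrow> gabs (a - b) < e)"
    if "length y = m" "length p = n" "length x' = m" for y r p x' a b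
  proof -
    note layout = nth_equi_radius_layout[OF that, where r = r and a = a and b = b, folded N_def]
    show ?thesis unfolding \<psi>_def layout(1-5) using layout(6,7) by auto
  qed
  have "\<forall>x\<in>C. length x = m" "\<forall>p\<in>P. length p = n" using assms length_of_definable by blast+
  note graph_iff = equi_radius_iff_family_graph[OF this]
  from \<open>definable (Suc (Suc N)) \<psi>\<close>
  have "definable (Suc m) (\<lambda>v. \<forall>p. length p = n \<longrightarrow> (\<forall>x'. length x' = m \<longrightarrow>
      (\<forall>a b. \<psi> ((((v @ p) @ x') @ [a]) @ [b]))))"
    unfolding N_def by (intro definable_all_list definable_all) (simp add: add.assoc)
  then show ?thesis
  proof (rule definable_cong)
    fix v :: "'a list" assume "length v = Suc m"
    then obtain y r where "v = y @ [r]" "length y = m" by (metis length_Suc_conv_rev)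
    then show "(\<forall>p. length p = n \<longrightarrow> (\<forall>x'. length x' = m \<longrightarrow> (\<forall>a b. \<psi> ((((v @ p) @ x') @ [a]) @ [b]))))
      = equi_radius C P f e (butlast v) (last v)"
      by (simp add: \<psi>_layout graph_iff)
  qed
qed

end

locale definably_complete_expansion = ordered_group_expansion +
  assumes complete: "definably_complete S"
begin

lemma definable_has_Sup:
  assumes "definable 1 (\<lambda>v. \<phi> (v!0))" "\<phi> a" "\<forall>x. \<phi> x \<longrightarrow> x \<le> b"
  obtains s where "\<forall>x. \<phi> x \<longrightarrow> x \<le> s" "\<forall>u. (\<forall>x. \<phi> x \<longrightarrow> x \<le> u) \<longrightarrow> s \<le> u"
proof -
  let ?X = "{xs. length xs = 1 \<and> \<phi> (xs!0)}"
  have X: "?X \<in> S 1" using assms(1) unfolding definable_def .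
  have slice: "{x. [x] \<in> ?X} = {x. \<phi> x}" by auto
  have "\<exists>s. (\<forall>x\<in>{x. \<phi> x}. x \<le> s) \<and> (\<forall>u. (\<forall>x\<in>{x. \<phi> x}. x \<le> u) \<longrightarrow> s \<le> u)"
    using complete[unfolded definably_complete_def, rule_format, OF X, unfolded Let_def slice, THEN conjunct1]
      assms(2,3) by blast
  then show ?thesis using that by auto
qed

lemma uniform_radius_interval:
  fixes Q :: "'a \<Rightarrow> 'a \<Rightarrow> bool"
  assumes dense: "\<And>a::'a. 0 < a \<Longrightarrow> \<exists>b. 0 < b \<and> b < a"
    and definable_Q: "definable 2 (\<lambda>v. Q (v!0) (v!1))"
    and mono: "\<And>y r r'. 0 < r' \<Longrightarrow> r' \<le> r \<Longrightarrow> Q y r \<Longrightarrow> Q y r'"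
    and "0 \<le> K"
    and locally: "\<forall>x\<in>{-K..K}. \<exists>r>0. \<forall>y\<in>{-K..K}. gabs (x - y) < r \<longrightarrow> Q y r"
  shows "\<exists>r>0. \<forall>y\<in>{-K..K}. Q y r"
proof -
  define \<phi> where "\<phi> t \<longleftrightarrow> t \<in> {-K..K} \<and> (\<exists>r>0. \<forall>y\<in>{-K..t}. Q y r)" for t
  have ends: "-K \<in> {-K..K}" "K \<in> {-K..K}" using \<open>0 \<le> K\<close> by auto
  have "\<phi> (-K)"
  proof -
    obtain r where "0 < r" "\<forall>y\<in>{-K..K}. gabs (-K - y) < r \<longrightarrow> Q y r" using locally ends by blast
    then have "\<forall>y\<in>{-K..-K}. Q y r" using ends by (auto simp: gabs_def)
    then show ?thesis using \<open>0 < r\<close> ends unfolding \<phi>_def by blast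
  qed
  moreover have bounded: "\<forall>x. \<phi> x \<longrightarrow> x \<le> K" unfolding \<phi>_def by auto
  moreover have "definable 1 (\<lambda>v. \<phi> (v!0))"
    unfolding \<phi>_def by (rule definable_prefix_radius[OF definable_Q])
  ultimately obtain s where s_ub: "\<forall>x. \<phi> x \<longrightarrow> x \<le> s" and s_least: "\<forall>u. (\<forall>x. \<phi> x \<longrightarrow> x \<le> u) \<longrightarrow> s \<le> u"
    using definable_has_Sup by metis
  have "s \<in> {-K..K}" using s_ub s_least \<open>\<phi> (-K)\<close> bounded by auto
  then obtain r0 where r0: "0 < r0" "\<forall>y\<in>{-K..K}. gabs (s - y) < r0 \<longrightarrow> Q y r0"
    using locally by blast
  obtain t where t: "\<phi> t" "s - r0 < t"
  proof -
    have "\<not> s \<le> s - r0" using r0(1) by (simp add: le_diff_eq)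
    then show ?thesis using s_least that by (meson not_le)
  qed
  then obtain r1 where r1: "0 < r1" "\<forall>y\<in>{-K..t}. Q y r1" unfolding \<phi>_def by blast
  have extend: "\<phi> t'" if "t' \<in> {-K..K}" "t' < s + r0" for t'
    using prefix_radius_extend[OF mono r1 r0 t(2)] that unfolding \<phi>_def by auto
  have "s = K"
  proof (rule ccontr)
    assume "s \<noteq> K"
    then have "s < K" using \<open>s \<in> {-K..K}\<close> by auto
    obtain b where b: "0 < b" "b < r0" using dense[OF r0(1)] by blast
    have "s < min (s + b) K" using b \<open>s < K\<close> by simp
    moreover have "\<phi> (min (s + b) K)"
      using b \<open>s \<in> {-K..K}\<close> \<open>s < K\<close> \<open>0 \<le> K\<close>
      by (intro extend) (auto simp: min_less_iff_disj intro: order_trans[OF _ less_imp_le[of s "s + b"]])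
    ultimately show False using s_ub by (auto simp: not_le[symmetric])
  qed
  then have "\<phi> K" using extend ends r0(1) by simp
  then show ?thesis unfolding \<phi>_def by auto
qed

lemma uniform_radius_cube:
  fixes Q :: "'a list \<Rightarrow> 'a \<Rightarrow> bool"
  assumes dense: "\<And>a::'a. 0 < a \<Longrightarrow> \<exists>b. 0 < b \<and> b < a" and "0 \<le> K"
    and "definable (Suc m) (\<lambda>v. Q (butlast v) (last v))"
    and "\<And>y r r'. 0 < r' \<Longrightarrow> r' \<le> r \<Longrightarrow> Q y r \<Longrightarrow> Q y r'"
    and "\<forall>x\<in>cube m K. \<exists>r>0. \<forall>y\<in>cube m K. ldist x y < r \<longrightarrow> Q y r"
  shows "\<exists>r>0. \<forall>y\<in>cube m K. Q y r"
  using assms(3-)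
proof (induction m arbitrary: Q)
  case 0
  then obtain r where "0 < r" "ldist [] [] < r \<longrightarrow> Q [] r" by (auto simp: cube_0)
  then show ?case by (auto simp: cube_0 ldist_less_iff)
next
  case (Suc m)
  note definable_Q = Suc.prems(1) and mono = Suc.prems(2) and locally = Suc.prems(3)
  have "\<exists>r>0. \<forall>w\<in>{-K..K}. \<forall>z\<in>cube m K. Q (w # z) r"
  proof (rule uniform_radius_interval[OF dense])
    show "definable 2 (\<lambda>v. \<forall>z\<in>cube m K. Q (v!0 # z) (v!1))"
      by (rule definable_cube_fibre_radius[OF definable_Q])
    show "\<forall>x\<in>{-K..K}. \<exists>r>0. \<forall>w\<in>{-K..K}. gabs (x - w) < r \<longrightarrow> (\<forall>z\<in>cube m K. Q (w # z) r)"
    proof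
      fix w0 assume "w0 \<in> {-K..K}"
      have "\<exists>r>0. \<forall>z\<in>cube m K. \<forall>w\<in>{-K..K}. gabs (w0 - w) < r \<longrightarrow> Q (w # z) r"
      proof (rule Suc.IH)
        show "definable (Suc m) (\<lambda>v. \<forall>w\<in>{-K..K}. gabs (w0 - w) < last v \<longrightarrow> Q (w # butlast v) (last v))"
          by (rule definable_slice_radius[OF definable_Q])
        show "\<forall>w\<in>{-K..K}. gabs (w0 - w) < r' \<longrightarrow> Q (w # z) r'"
          if "0 < r'" "r' \<le> r" "\<forall>w\<in>{-K..K}. gabs (w0 - w) < r \<longrightarrow> Q (w # z) r" for z r r'
          using that mono by (meson less_le_trans)
      qed (rule slice_radius_locally[OF locally \<open>w0 \<in> {-K..K}\<close>])
      then show "\<exists>r>0. \<forall>w\<in>{-K..K}. gabs (w0 - w) < r \<longrightarrow> (\<forall>z\<in>cube m K. Q (w # z) r)"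
        by blast
    qed
  qed (use mono \<open>0 \<le> K\<close> in blast)+
  then obtain r where "0 < r" "\<forall>w\<in>{-K..K}. \<forall>z\<in>cube m K. Q (w # z) r" by blast
  then show ?case by (intro exI[of _ r]) (auto simp: mem_cube_Suc_iff)
qed

lemma equi_continuous_imp_uniformly_equi_continuous:
  assumes dense: "\<And>a::'a. 0 < a \<Longrightarrow> \<exists>b. 0 < b \<and> b < a"
    and "C \<in> S m" "P \<in> S n" "family_graph C P f \<in> S (m + n + 1)"
    and "closed_in_power m C" "bounded_in_power C" "equi_continuous C P f"
  shows "uniformly_equi_continuous C P f"
  unfolding uniformly_equi_continuous_def
proof (intro allI impI)
  fix e :: 'a assume "0 < e"
  have lengths: "\<forall>x\<in>C. length x = m" using assms(2) length_of_definable by blast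
  obtain K where "0 \<le> K" "C \<subseteq> cube m K" using bounded_in_power_subset_cube[OF assms(6) lengths] .
  have "\<exists>r>0. \<forall>y\<in>cube m K. equi_radius C P f e y r"
  proof (rule uniform_radius_cube[OF dense \<open>0 \<le> K\<close>])
    show "definable (Suc m) (\<lambda>v. equi_radius C P f e (butlast v) (last v))"
      using assms(2-4) by (rule definable_equi_radius)
    show "\<And>y r r'. 0 < r' \<Longrightarrow> r' \<le> r \<Longrightarrow> equi_radius C P f e y r \<Longrightarrow> equi_radius C P f e y r'"
      unfolding equi_radius_def by (meson less_le_trans)
    show "\<forall>x\<in>cube m K. \<exists>r>0. \<forall>y\<in>cube m K. ldist x y < r \<longrightarrow> equi_radius C P f e y r"
    proof
      fix x assume "x \<in> cube m K"
      then have "length x = m" by (simp add: cube_def)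
      from equi_radius_locally[OF dense lengths assms(5,7) this \<open>0 < e\<close>]
      show "\<exists>r>0. \<forall>y\<in>cube m K. ldist x y < r \<longrightarrow> equi_radius C P f e y r" by blast
    qed
  qed
  then show "\<exists>d>0. \<forall>p\<in>P. \<forall>x\<in>C. \<forall>x'\<in>C. ldist x x' < d \<longrightarrow> gabs (f x p - f x' p) < e"
    using \<open>C \<subseteq> cube m K\<close> unfolding equi_radius_def by blast
qed

end

theorem mainTheorem5:
  fixes S :: "nat \<Rightarrow> ('a::linordered_ab_group_add) list set set"
    and C P :: "'a list set" and f :: "'a list \<Rightarrow> 'a list \<Rightarrow> 'a" and m n :: nat
  assumes "definable_structure S"
    and "definably_complete S"
    and "locally_o_minimal S"
    and "C \<in> S m" and "P \<in> S n"
    and "closed_in_power m C" and "bounded_in_power C"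
    and "{x @ p @ [f x p] | x p. x \<in> C \<and> p \<in> P} \<in> S (m + n + 1)"
  shows "equi_continuous C P f \<longleftrightarrow> uniformly_equi_continuous C P f"
proof
  assume "uniformly_equi_continuous C P f"
  then show "equi_continuous C P f"
    unfolding uniformly_equi_continuous_def equi_continuous_def by metis
next
  assume equi: "equi_continuous C P f"
  interpret definably_complete_expansion S
    by unfold_locales (fact assms(1), fact assms(2))
  show "uniformly_equi_continuous C P f"
  proof (cases "\<forall>a::'a. 0 < a \<longrightarrow> (\<exists>b. 0 < b \<and> b < a)")
    case True
    then show ?thesis
      using assms(4-8) equi unfolding family_graph_def[symmetric]
      by (intro equi_continuous_imp_uniformly_equi_continuous) blast+
  next
    case False
    then obtain u :: 'a where "0 < u" "\<forall>b. 0 < b \<longrightarrow> \<not> b < u" by blast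
    moreover have "\<forall>x\<in>C. length x = m" using assms(4) length_of_definable by blast
    ultimately show ?thesis by (rule uniformly_equi_continuous_if_discrete)
  qed
qed

end
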